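(* Let $r\ge4$ be even and $n=r+2$. For $i=1,\dots,4$ let $a_i,g_i:\mathbb F_2^r\to\mathbb F_2$ and define $\mathfrak f_i:\mathbb F_2^r\times\mathbb F_2^2\to\mathbb F_2$ by $\mathfrak f_i(x,y)=a_i(x)\oplus(g_i(x)\oplus y_1)(g_i(x)\oplus y_2)$. Assume that each $a_i$ is bent with $a_1^*\oplus a_2^*\oplus a_3^*\oplus a_4^*=1$ on $\mathbb F_2^r$, and that $a_1\oplus g_1,\dots,a_4\oplus g_4$ are semi-bent functions with pairwise disjoint Walsh supports. Then each $\mathfrak f_i$ satisfies $W_{\mathfrak f_i}(w)\in\{0,\pm2^{n/2},\pm2^{(n+2)/2}\}$ for all $w\in\mathbb F_2^n$, and: (a) the sets $S^{[1]}_{\mathfrak f_i}=\{w\in\mathbb F_2^n:|W_{\mathfrak f_i}(w)|=2^{(n+2)/2}\}$, $i=1,\dots,4$, are pairwise disjoint; (b) the sets $S^{[2]}_{\mathfrak f_i}=\{w\in\mathbb F_2^n:|W_{\mathfrak f_i}(w)|=2^{n/2}\}$ are all equal to a common set $S$, and the functions $\mathfrak f^*_{[2],i}:S\to\mathbb F_2$ defined by $W_{\mathfrak f_i}(w)=2^{n/2}(-1)^{\mathfrak f^*_{[2],i}(w)}$ satisfy $\mathfrak f^*_{[2],1}\oplus\mathfrak f^*_{[2],2}\oplus\mathfrak f^*_{[2],3}\oplus\mathfrak f^*_{[2],4}=1$ on $S$.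
   Context: $W_f(\omega)=\sum_x(-1)^{f(x)\oplus\omega\cdot x}$, Walsh support $S_f=\{\omega:W_f(\omega)\ne0\}$. For even $r$, $a$ is bent if $|W_a(u)|=2^{r/2}$ for all $u$, with dual $a^*$ defined by $W_a(u)=2^{r/2}(-1)^{a^*(u)}$; $a$ is semi-bent if $W_a(u)\in\{0,\pm2^{(r+2)/2}\}$ for all $u$. *)

theory Defs
  imports Main
begin

text \<open>The vector space F_2^m is modelled as the set of boolean lists of length m;
  F_2 is bool with xor = (\<noteq>) and multiplication = (\<and>).\<close>

definition vecs :: "nat \<Rightarrow> bool list set" where
  "vecs m = {xs. length xs = m}"

definition dotp :: "bool list \<Rightarrow> bool list \<Rightarrow> bool" where
  "dotp u x = odd (card {i. i < length u \<and> i < length x \<and> u ! i \<and> x ! i})"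

definition walsh :: "nat \<Rightarrow> (bool list \<Rightarrow> bool) \<Rightarrow> bool list \<Rightarrow> int" where
  "walsh m f w = (\<Sum>x\<in>vecs m. (-1::int) ^ (if f x \<noteq> dotp w x then 1 else 0))"

definition wsupp :: "nat \<Rightarrow> (bool list \<Rightarrow> bool) \<Rightarrow> bool list set" where
  "wsupp m f = {w \<in> vecs m. walsh m f w \<noteq> 0}"

definition bent :: "nat \<Rightarrow> (bool list \<Rightarrow> bool) \<Rightarrow> bool" where
  "bent m f \<longleftrightarrow> (\<forall>u\<in>vecs m. \<bar>walsh m f u\<bar> = 2 ^ (m div 2))"

text \<open>Dual of a bent function: W_f(u) = 2^(m/2) (-1)^(f*(u)), i.e. f*(u) = 1 iff W_f(u) < 0.\<close>
definition bent_dual :: "nat \<Rightarrow> (bool list \<Rightarrow> bool) \<Rightarrow> bool list \<Rightarrow> bool" where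
  "bent_dual m f u \<longleftrightarrow> walsh m f u = - (2 ^ (m div 2))"

definition semibent :: "nat \<Rightarrow> (bool list \<Rightarrow> bool) \<Rightarrow> bool" where
  "semibent m f \<longleftrightarrow> (\<forall>u\<in>vecs m. walsh m f u \<in> {0, 2 ^ ((m + 2) div 2), - (2 ^ ((m + 2) div 2))})"

text \<open>frak f(x,y) = a(x) xor (g(x) xor y1)(g(x) xor y2), on F_2^r x F_2^2 identified
  with F_2^(r+2) via concatenation z = x @ [y1, y2].\<close>
definition frakf :: "nat \<Rightarrow> (bool list \<Rightarrow> bool) \<Rightarrow> (bool list \<Rightarrow> bool) \<Rightarrow> bool list \<Rightarrow> bool" where
  "frakf r a g z = (a (take r z) \<noteq> ((g (take r z) \<noteq> z ! r) \<and> (g (take r z) \<noteq> z ! (r + 1))))"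

definition S1 :: "nat \<Rightarrow> (bool list \<Rightarrow> bool) \<Rightarrow> bool list set" where
  "S1 n f = {w \<in> vecs n. \<bar>walsh n f w\<bar> = 2 ^ ((n + 2) div 2)}"

definition S2 :: "nat \<Rightarrow> (bool list \<Rightarrow> bool) \<Rightarrow> bool list set" where
  "S2 n f = {w \<in> vecs n. \<bar>walsh n f w\<bar> = 2 ^ (n div 2)}"

text \<open>f*_[2](w), defined on S^[2] by W_f(w) = 2^(n/2) (-1)^(f*_[2](w)).\<close>
definition dual2 :: "nat \<Rightarrow> (bool list \<Rightarrow> bool) \<Rightarrow> bool list \<Rightarrow> bool" where
  "dual2 n f w \<longleftrightarrow> walsh n f w = - (2 ^ (n div 2))"

end

theory Submission
  imports Defs
begin

text \<open>Write \<open>w = (u, v1, v2)\<close> with \<open>u \<in> F_2^r\<close>. Summing out \<open>y\<close> first, the Walsh transform of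
  \<open>frakf r a g\<close> factors: on the diagonal \<open>v1 = v2\<close> it is \<open>2 (-1)^v1 W_a(u)\<close>, off the diagonal it
  is \<open>2 W_{a \<oplus> g}(u)\<close>. Hence if \<open>a\<close> is bent and \<open>a \<oplus> g\<close> semi-bent, the value \<open>\<plusminus>2^(n/2)\<close> is
  attained exactly on the diagonal, with dual \<open>v \<oplus> a*(u)\<close>, so the four duals add up to
  \<open>a_1* \<oplus> \<dots> \<oplus> a_4* = 1\<close>; and \<open>\<plusminus>2^((n+2)/2)\<close> is attained only above the Walsh support of
  \<open>a \<oplus> g\<close>, so disjoint supports give disjoint sets \<open>S^[1]\<close>.\<close>

lemma dotp_Nil [simp]: "dotp [] x = False" "dotp u [] = False"
  by (auto simp: dotp_def)

lemma dotp_Cons [simp]: "dotp (a # u) (b # x) = ((a \<and> b) \<noteq> dotp u x)"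
proof -
  let ?B = "{i. i < length u \<and> i < length x \<and> u ! i \<and> x ! i}"
  have "{i. i < length (a # u) \<and> i < length (b # x) \<and> (a # u) ! i \<and> (b # x) ! i}
      = (if a \<and> b then {0} else {}) \<union> Suc ` ?B"
    by (auto simp: image_iff less_Suc_eq_0_disj nth_Cons')
  moreover have "card ((if a \<and> b then {0} else {}) \<union> Suc ` ?B) = (if a \<and> b then 1 else 0) + card ?B"
    by (auto simp: card_image)
  ultimately show ?thesis
    unfolding dotp_def by auto
qed

lemma dotp_append: "length u = length x \<Longrightarrow> dotp (u @ u') (x @ x') = (dotp u x \<noteq> dotp u' x')"
proof (induction u arbitrary: x)
  case (Cons c u)
  then show ?case
    by (cases x) auto
qed simp

lemma vecs_add2_cases:
  assumes "w \<in> vecs (r + 2)"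
  obtains u v1 v2 where "u \<in> vecs r" "w = u @ [v1, v2]"
proof
  have "drop r w = [w ! r, w ! (r + 1)]"
    using assms by (simp add: vecs_def list_eq_iff_nth_eq less_2_cases_iff)
  then show "w = take r w @ [w ! r, w ! (r + 1)]"
    by (metis append_take_drop_id)
qed (use assms in \<open>simp add: vecs_def\<close>)

lemma sum_vecs_snoc: "(\<Sum>z\<in>vecs (Suc m). f z) = (\<Sum>x\<in>vecs m. \<Sum>b\<in>UNIV. f (x @ [b]))"
proof -
  have "vecs (Suc m) = (\<lambda>(x, b). x @ [b]) ` (vecs m \<times> UNIV)"
  proof (intro set_eqI iffI)
    fix z assume "z \<in> vecs (Suc m)"
    then have "z \<noteq> []" "butlast z \<in> vecs m"
      by (auto simp: vecs_def)
    then show "z \<in> (\<lambda>(x, b). x @ [b]) ` (vecs m \<times> UNIV)"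
      by (intro image_eqI [of _ _ "(butlast z, last z)"]) auto
  qed (auto simp: vecs_def)
  moreover have "inj_on (\<lambda>(x, b). x @ [b]) (vecs m \<times> UNIV)"
    by (auto simp: inj_on_def)
  ultimately show ?thesis
    by (simp add: sum.reindex sum.cartesian_product split_def)
qed

lemma sum_vecs_add2:
  "(\<Sum>z\<in>vecs (r + 2). f z) = (\<Sum>x\<in>vecs r. \<Sum>y1\<in>UNIV. \<Sum>y2\<in>UNIV. f (x @ [y1, y2]))"
  by (simp add: sum_vecs_snoc)

lemma walsh_quadratic_pair:
  "(\<Sum>y1\<in>UNIV. \<Sum>y2\<in>UNIV.
      (-1::int) ^ (if (A \<noteq> ((G \<noteq> y1) \<and> (G \<noteq> y2))) \<noteq> (D \<noteq> ((v1 \<and> y1) \<noteq> (v2 \<and> y2))) then 1 else 0))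
   = (if v1 = v2 then (if v1 then -2 else 2) * (-1) ^ (if A \<noteq> D then 1 else 0)
      else 2 * (-1) ^ (if (A \<noteq> G) \<noteq> D then 1 else 0))"
  by (cases A; cases G; cases D; cases v1; cases v2) (simp_all add: UNIV_bool)

lemma walsh_frakf:
  assumes "u \<in> vecs r"
  shows "walsh (r + 2) (frakf r a g) (u @ [v1, v2])
       = (if v1 = v2 then (if v1 then -2 else 2) * walsh r a u
          else 2 * walsh r (\<lambda>x. a x \<noteq> g x) u)"
proof -
  have inner: "(\<Sum>y1\<in>UNIV. \<Sum>y2\<in>UNIV. (-1::int) ^ (if frakf r a g (x @ [y1, y2])
                 \<noteq> dotp (u @ [v1, v2]) (x @ [y1, y2]) then 1 else 0))
      = (if v1 = v2 then (if v1 then -2 else 2) * (-1) ^ (if a x \<noteq> dotp u x then 1 else 0)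
         else 2 * (-1) ^ (if (a x \<noteq> g x) \<noteq> dotp u x then 1 else 0))"
    if "x \<in> vecs r" for x
  proof -
    have "length x = r" "length u = length x"
      using that assms by (simp_all add: vecs_def)
    then have "frakf r a g (x @ [y1, y2]) = (a x \<noteq> ((g x \<noteq> y1) \<and> (g x \<noteq> y2)))"
      and "dotp (u @ [v1, v2]) (x @ [y1, y2]) = (dotp u x \<noteq> ((v1 \<and> y1) \<noteq> (v2 \<and> y2)))" for y1 y2
      by (simp_all add: frakf_def nth_append dotp_append)
    then show ?thesis
      by (simp only: walsh_quadratic_pair)
  qed
  have "walsh (r + 2) (frakf r a g) (u @ [v1, v2])
      = (\<Sum>x\<in>vecs r. if v1 = v2 then (if v1 then -2 else 2) * (-1) ^ (if a x \<noteq> dotp u x then 1 else 0)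
                     else 2 * (-1) ^ (if (a x \<noteq> g x) \<noteq> dotp u x then 1 else 0))"
    unfolding walsh_def sum_vecs_add2 by (intro sum.cong refl inner)
  then show ?thesis
    by (cases "v1 = v2") (simp_all add: walsh_def sum_distrib_left)
qed

lemma power_div2_add4 [simp]: "(2::int) ^ ((m + 4) div 2) = 4 * 2 ^ (m div 2)"
proof -
  have "(m + 4) div 2 = Suc (Suc (m div 2))"
    by simp
  then show ?thesis
    by simp
qed

lemma walsh_frakf_diagonal:
  assumes "bent r a" "u \<in> vecs r"
  shows "\<bar>walsh (r + 2) (frakf r a g) (u @ [v, v])\<bar> = 2 ^ ((r + 2) div 2)"
    and "dual2 (r + 2) (frakf r a g) (u @ [v, v]) \<longleftrightarrow> v \<noteq> bent_dual r a u"
proof -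
  have "walsh r a u = 2 ^ (r div 2) \<or> walsh r a u = - (2 ^ (r div 2))"
    using assms by (auto simp: bent_def abs_eq_iff)
  moreover have "walsh (r + 2) (frakf r a g) (u @ [v, v]) = (if v then -2 else 2) * walsh r a u"
    using walsh_frakf [OF assms(2)] by simp
  ultimately show "\<bar>walsh (r + 2) (frakf r a g) (u @ [v, v])\<bar> = 2 ^ ((r + 2) div 2)"
    and "dual2 (r + 2) (frakf r a g) (u @ [v, v]) \<longleftrightarrow> v \<noteq> bent_dual r a u"
    by (auto simp: bent_dual_def dual2_def)
qed

lemma walsh_frakf_off_diagonal:
  assumes "semibent r (\<lambda>x. a x \<noteq> g x)" "u \<in> vecs r" "v1 \<noteq> v2"
  shows "walsh (r + 2) (frakf r a g) (u @ [v1, v2]) \<in> {0, 2 ^ ((r + 4) div 2), - (2 ^ ((r + 4) div 2))}"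
    and "walsh (r + 2) (frakf r a g) (u @ [v1, v2]) \<noteq> 0 \<longleftrightarrow> u \<in> wsupp r (\<lambda>x. a x \<noteq> g x)"
proof -
  have W: "walsh (r + 2) (frakf r a g) (u @ [v1, v2]) = 2 * walsh r (\<lambda>x. a x \<noteq> g x) u"
    using walsh_frakf [OF assms(2)] assms(3) by simp
  show "walsh (r + 2) (frakf r a g) (u @ [v1, v2]) \<in> {0, 2 ^ ((r + 4) div 2), - (2 ^ ((r + 4) div 2))}"
    using assms(1,2) unfolding W by (auto simp: semibent_def)
  show "walsh (r + 2) (frakf r a g) (u @ [v1, v2]) \<noteq> 0 \<longleftrightarrow> u \<in> wsupp r (\<lambda>x. a x \<noteq> g x)"
    using assms(2) unfolding W by (simp add: wsupp_def)
qed

lemma walsh_frakf_values: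
  assumes "bent r a" "semibent r (\<lambda>x. a x \<noteq> g x)" "w \<in> vecs (r + 2)"
  shows "walsh (r + 2) (frakf r a g) w \<in> {0, 2 ^ ((r + 2) div 2), - (2 ^ ((r + 2) div 2)),
                                          2 ^ ((r + 4) div 2), - (2 ^ ((r + 4) div 2))}"
proof -
  obtain u v1 v2 where u: "u \<in> vecs r" and w: "w = u @ [v1, v2]"
    using vecs_add2_cases [OF assms(3)] .
  show ?thesis
  proof (cases "v1 = v2")
    case True
    then show ?thesis
      using walsh_frakf_diagonal(1) [OF assms(1) u, of g v1] unfolding w by (auto simp: abs_eq_iff)
  next
    case False
    then show ?thesis
      using walsh_frakf_off_diagonal(1) [OF assms(2) u False] unfolding w by auto
  qed
qed

lemma S2_frakf:
  assumes "bent r a" "semibent r (\<lambda>x. a x \<noteq> g x)"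
  shows "S2 (r + 2) (frakf r a g) = {u @ [v, v] | u v. u \<in> vecs r}"
proof (intro set_eqI iffI)
  fix w assume "w \<in> S2 (r + 2) (frakf r a g)"
  then have w: "w \<in> vecs (r + 2)" "\<bar>walsh (r + 2) (frakf r a g) w\<bar> = 2 ^ ((r + 2) div 2)"
    by (auto simp: S2_def)
  obtain u v1 v2 where u: "u \<in> vecs r" and w_eq: "w = u @ [v1, v2]"
    using vecs_add2_cases [OF w(1)] .
  have "v1 = v2"
  proof (rule ccontr)
    assume "v1 \<noteq> v2"
    with walsh_frakf_off_diagonal(1) [OF assms(2) u this] w(2) show False
      unfolding w_eq by auto
  qed
  then show "w \<in> {u @ [v, v] | u v. u \<in> vecs r}"
    using u w_eq by blast
next
  fix w assume "w \<in> {u @ [v, v] | u v. u \<in> vecs r}"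
  then obtain u v where "u \<in> vecs r" "w = u @ [v, v]"
    by blast
  then show "w \<in> S2 (r + 2) (frakf r a g)"
    using walsh_frakf_diagonal(1) [OF assms(1)] by (auto simp: S2_def vecs_def)
qed

lemma S1_frakf_take_wsupp:
  assumes "bent r a" "semibent r (\<lambda>x. a x \<noteq> g x)" "w \<in> S1 (r + 2) (frakf r a g)"
  shows "take r w \<in> wsupp r (\<lambda>x. a x \<noteq> g x)"
proof -
  have w: "w \<in> vecs (r + 2)" "\<bar>walsh (r + 2) (frakf r a g) w\<bar> = 2 ^ ((r + 4) div 2)"
    using assms(3) by (auto simp: S1_def)
  obtain u v1 v2 where u: "u \<in> vecs r" and w_eq: "w = u @ [v1, v2]"
    using vecs_add2_cases [OF w(1)] .
  have off_diagonal: "v1 \<noteq> v2"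
  proof
    assume "v1 = v2"
    with walsh_frakf_diagonal(1) [OF assms(1) u, of g v1] w(2)
    have "(4::int) * 2 ^ (r div 2) = 2 * 2 ^ (r div 2)"
      unfolding w_eq by simp
    then show False
      by simp
  qed
  have "walsh (r + 2) (frakf r a g) (u @ [v1, v2]) \<noteq> 0"
    using w(2) unfolding w_eq by (intro notI) simp
  then have "u \<in> wsupp r (\<lambda>x. a x \<noteq> g x)"
    by (rule walsh_frakf_off_diagonal(2) [OF assms(2) u off_diagonal, THEN iffD1])
  moreover have "take r w = u"
    using u w_eq by (simp add: vecs_def)
  ultimately show ?thesis
    by simp
qed

lemma S1_frakf_disjoint:
  assumes "bent r a" "semibent r (\<lambda>x. a x \<noteq> g x)" "bent r b" "semibent r (\<lambda>x. b x \<noteq> h x)"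
    and "wsupp r (\<lambda>x. a x \<noteq> g x) \<inter> wsupp r (\<lambda>x. b x \<noteq> h x) = {}"
  shows "S1 (r + 2) (frakf r a g) \<inter> S1 (r + 2) (frakf r b h) = {}"
  using S1_frakf_take_wsupp [OF assms(1,2)] S1_frakf_take_wsupp [OF assms(3,4)] assms(5) by blast

theorem mainTheorem7:
  fixes r n :: nat and a g :: "nat \<Rightarrow> bool list \<Rightarrow> bool"
  assumes "r \<ge> 4" and "even r" and "n = r + 2"
    and "\<forall>i\<in>{1..4}. bent r (a i)"
    and "\<forall>u\<in>vecs r. ((bent_dual r (a 1) u \<noteq> bent_dual r (a 2) u)
                        \<noteq> (bent_dual r (a 3) u \<noteq> bent_dual r (a 4) u))"
    and "\<forall>i\<in>{1..4}. semibent r (\<lambda>x. a i x \<noteq> g i x)"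
    and "\<forall>i\<in>{1..4}. \<forall>j\<in>{1..4}. i \<noteq> j \<longrightarrow>
           wsupp r (\<lambda>x. a i x \<noteq> g i x) \<inter> wsupp r (\<lambda>x. a j x \<noteq> g j x) = {}"
  shows "(\<forall>i\<in>{1..4}. \<forall>w\<in>vecs n. walsh n (frakf r (a i) (g i)) w \<in>
             {0, 2 ^ (n div 2), - (2 ^ (n div 2)), 2 ^ ((n + 2) div 2), - (2 ^ ((n + 2) div 2))})
       \<and> (\<forall>i\<in>{1..4}. \<forall>j\<in>{1..4}. i \<noteq> j \<longrightarrow>
             S1 n (frakf r (a i) (g i)) \<inter> S1 n (frakf r (a j) (g j)) = {})
       \<and> (\<exists>S. (\<forall>i\<in>{1..4}. S2 n (frakf r (a i) (g i)) = S)
             \<and> (\<forall>w\<in>S. ((dual2 n (frakf r (a 1) (g 1)) w \<noteq> dual2 n (frakf r (a 2) (g 2)) w)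
                      \<noteq> (dual2 n (frakf r (a 3) (g 3)) w \<noteq> dual2 n (frakf r (a 4) (g 4)) w))))"
proof -
  have n2: "n + 2 = r + 4"
    using assms(3) by simp
  have "\<forall>i\<in>{1..4}. \<forall>w\<in>vecs n. walsh n (frakf r (a i) (g i)) w \<in>
          {0, 2 ^ (n div 2), - (2 ^ (n div 2)), 2 ^ ((n + 2) div 2), - (2 ^ ((n + 2) div 2))}"
    unfolding n2 unfolding assms(3) using assms(4,6) by (intro ballI walsh_frakf_values) auto
  moreover have "\<forall>i\<in>{1..4}. \<forall>j\<in>{1..4}. i \<noteq> j \<longrightarrow>
          S1 n (frakf r (a i) (g i)) \<inter> S1 n (frakf r (a j) (g j)) = {}"
    unfolding assms(3) using assms(4,6,7) by (intro ballI impI S1_frakf_disjoint) auto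
  moreover have "\<forall>i\<in>{1..4}. S2 n (frakf r (a i) (g i)) = {u @ [v, v] | u v. u \<in> vecs r}"
    unfolding assms(3) using assms(4,6) by (intro ballI S2_frakf) auto
  moreover have "\<forall>w\<in>{u @ [v, v] | u v. u \<in> vecs r}.
          (dual2 n (frakf r (a 1) (g 1)) w \<noteq> dual2 n (frakf r (a 2) (g 2)) w)
          \<noteq> (dual2 n (frakf r (a 3) (g 3)) w \<noteq> dual2 n (frakf r (a 4) (g 4)) w)"
    (is "\<forall>w\<in>?S. ?duals_sum w")
  proof
    fix w assume "w \<in> ?S"
    then obtain u v where u: "u \<in> vecs r" and w: "w = u @ [v, v]"
      by blast
    have "dual2 n (frakf r (a i) (g i)) w \<longleftrightarrow> v \<noteq> bent_dual r (a i) u" if "i \<in> {1..4}" for i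
      using walsh_frakf_diagonal(2) [OF assms(4) [rule_format, OF that] u] unfolding w assms(3) .
    then show "?duals_sum w"
      using assms(5) u by auto
  qed
  ultimately show ?thesis
    by blast
qed

end
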